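(* For all $d\ge1$, $\alpha>1$, positive weights $\boldsymbol\gamma=\{\gamma_u\}$ with $\gamma_\emptyset=1$, and $M\ge1$, $$\sum_{\mathbf h\notin\mathcal A_d(M)}\frac1{r(\mathbf h)}\le C_{2,d,\tau,\alpha,\boldsymbol\gamma}\,M^{-\frac{1-\tau}{\alpha\tau}}\qquad\text{for all }\tau\in(\tfrac1\alpha,1),$$ where $$C_{2,d,\tau,\alpha,\boldsymbol\gamma}:=\gamma_{\{1\}}^{\frac{\tau-1}{\alpha\tau}}\,\frac{\tau}{1-\tau}\Big(\sum_{u\subseteq\{1:d\}}\gamma_u^\tau[2\zeta(\alpha\tau)]^{|u|}\Big)^{1/\tau}.$$
   Context: $\{1:d\}=\{1,\ldots,d\}$; $\zeta$ is the Riemann zeta function. Weights $\gamma_u>0$ for finite $u\subset\mathbb N$, $\gamma_\emptyset=1$. For $\mathbf h\in\mathbb Z^d$, $\mathrm{supp}(\mathbf h)=\{j:h_j\ne0\}$, $r(\mathbf h)=\gamma_{\mathrm{supp}(\mathbf h)}^{-1}\prod_{j\in\mathrm{supp}(\mathbf h)}|h_j|^\alpha$, and $\mathcal A_d(M)=\{\mathbf h\in\mathbb Z^d:r(\mathbf h)\le M\}$. *)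

theory Defs
  imports "HOL-Analysis.Analysis"
begin

definition zeta :: "real \<Rightarrow> real" where
  "zeta s = (\<Sum>n. 1 / real (Suc n) powr s)"

text \<open>Integer vectors in Z^d, represented as functions nat => int vanishing outside {1..d}.\<close>
definition lattice :: "nat \<Rightarrow> (nat \<Rightarrow> int) set" where
  "lattice d = {h. \<forall>j. j \<notin> {1..d} \<longrightarrow> h j = 0}"

definition supp :: "nat \<Rightarrow> (nat \<Rightarrow> int) \<Rightarrow> nat set" where
  "supp d h = {j \<in> {1..d}. h j \<noteq> 0}"

definition rfun :: "nat \<Rightarrow> (nat set \<Rightarrow> real) \<Rightarrow> real \<Rightarrow> (nat \<Rightarrow> int) \<Rightarrow> real" where
  "rfun d \<gamma> \<alpha> h = (\<Prod>j\<in>supp d h. real_of_int \<bar>h j\<bar> powr \<alpha>) / \<gamma> (supp d h)"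

definition Aset :: "nat \<Rightarrow> (nat set \<Rightarrow> real) \<Rightarrow> real \<Rightarrow> real \<Rightarrow> (nat \<Rightarrow> int) set" where
  "Aset d \<gamma> \<alpha> M = {h \<in> lattice d. rfun d \<gamma> \<alpha> h \<le> M}"

definition C2 :: "nat \<Rightarrow> real \<Rightarrow> real \<Rightarrow> (nat set \<Rightarrow> real) \<Rightarrow> real" where
  "C2 d \<tau> \<alpha> \<gamma> = \<gamma> {1} powr ((\<tau> - 1) / (\<alpha> * \<tau>)) * (\<tau> / (1 - \<tau>)) *
     (\<Sum>u\<in>Pow {1..d}. \<gamma> u powr \<tau> * (2 * zeta (\<alpha> * \<tau>)) ^ card u) powr (1 / \<tau>)"

end

theory Submission
  imports Defs
begin

text \<open>
  Put \<open>S = \<Sum>\<^sub>u \<gamma>\<^sub>u\<^sup>\<tau> (2 \<zeta>(\<alpha>\<tau>))\<^bsup>|u|\<^esup>\<close>. Grouping lattice points by their support and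
  using \<open>\<alpha>\<tau> > 1\<close> gives \<open>\<Sum>\<^sub>h r(h)\<^bsup>-\<tau>\<^esup> \<le> S\<close>. The points \<open>k e\<^sub>1\<close> with
  \<open>0 \<le> k \<le> x = (M \<gamma>({1}))\<^bsup>1/\<alpha>\<^esup>\<close> form a set \<open>L \<subseteq> A\<^sub>d(M)\<close> with \<open>N = |L| \<ge> x\<close>. If
  \<open>h\<^sub>1, h\<^sub>2, \<dots>\<close> are points outside \<open>A\<^sub>d(M)\<close> listed with increasing \<open>r\<close>, then the \<open>N + j\<close>
  points of \<open>L \<union> {h\<^sub>1, \<dots>, h\<^sub>j}\<close> all have \<open>r \<le> r(h\<^sub>j)\<close>, so \<open>(N + j) r(h\<^sub>j)\<^bsup>-\<tau>\<^esup> \<le> S\<close>,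
  i.e. \<open>1 / r(h\<^sub>j) \<le> S\<^bsup>1/\<tau>\<^esup> (N + j)\<^bsup>-1/\<tau>\<^esup>\<close>. Comparing \<open>\<Sum>\<^sub>j (N + j)\<^bsup>-1/\<tau>\<^esup>\<close> with an
  integral bounds the sum by \<open>\<tau>/(1 - \<tau>) S\<^bsup>1/\<tau>\<^esup> x\<^bsup>1-1/\<tau>\<^esup>\<close>, which is the claimed bound.
\<close>

lemma powr_succ_le_diff:
  fixes a p :: real
  assumes "a > 0" "p > 1"
  shows "(a + 1) powr (- p) \<le> (a powr (1 - p) - (a + 1) powr (1 - p)) / (p - 1)"
proof -
  have "((\<lambda>z. z powr (1 - p)) has_real_derivative (1 - p) * x powr (1 - p - 1)) (at x)"
    if "a \<le> x" for x
    using assms that by (intro has_real_derivative_powr) auto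
  from MVT2[of a "a + 1", OF _ this] obtain z where z: "a < z" "z < a + 1"
    and mvt: "(a + 1) powr (1 - p) - a powr (1 - p) = (a + 1 - a) * ((1 - p) * z powr (1 - p - 1))"
    by auto
  have "(a + 1) powr (- p) \<le> z powr (- p)"
    using z assms by (intro powr_mono2') auto
  also have "\<dots> = (a powr (1 - p) - (a + 1) powr (1 - p)) / (p - 1)"
    using mvt assms by (simp add: field_simps)
  finally show ?thesis .
qed

lemma sum_shifted_powr_le:
  fixes K p :: real
  assumes "K > 0" "p > 1"
  shows "(\<Sum>j=1..m. (K + real j) powr (- p)) \<le> K powr (1 - p) / (p - 1)"
proof -
  have "(\<Sum>j=1..m. (K + real j) powr (- p)) \<le> (K powr (1 - p) - (K + real m) powr (1 - p)) / (p - 1)"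
  proof (induction m)
    case (Suc m)
    have "K + real (Suc m) = K + real m + 1"
      by simp
    then have "(K + real (Suc m)) powr (- p)
        \<le> ((K + real m) powr (1 - p) - (K + real (Suc m)) powr (1 - p)) / (p - 1)"
      using powr_succ_le_diff[of "K + real m" p] assms by (simp only:)
    with Suc show ?case by (simp add: diff_divide_distrib)
  qed simp
  also have "\<dots> \<le> K powr (1 - p) / (p - 1)"
    using assms by (simp add: divide_right_mono)
  finally show ?thesis .
qed

lemma summable_zeta: "s > 1 \<Longrightarrow> summable (\<lambda>n. 1 / real (Suc n) powr s)"
  using summable_real_powr_iff[of "- s"] summable_Suc_iff[of "\<lambda>n. real n powr (- s)"]
  by (simp add: powr_minus_divide)

lemma zeta_nonneg: "s > 1 \<Longrightarrow> zeta s \<ge> 0"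
  unfolding zeta_def by (rule suminf_nonneg[OF summable_zeta]) auto

lemma sum_powr_le_zeta:
  assumes "s > 1" "finite N" "0 \<notin> N"
  shows "(\<Sum>n\<in>N. real n powr (- s)) \<le> zeta s"
proof -
  define K where "K = Suc -` N"
  have "N = Suc ` K"
    unfolding K_def using assms(3) by (auto simp: image_iff) (metis not0_implies_Suc)
  then have "(\<Sum>n\<in>N. real n powr (- s)) = (\<Sum>k\<in>K. 1 / real (Suc k) powr s)"
    by (simp add: sum.reindex powr_minus_divide)
  also have "\<dots> \<le> zeta s"
    unfolding zeta_def K_def using summable_zeta[OF assms(1)] assms(2)
    by (intro sum_le_suminf finite_vimageI) auto
  finally show ?thesis .
qed

lemma sum_abs_int_powr_le_2_zeta:
  assumes "s > 1" "finite B" "0 \<notin> B"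
  shows "(\<Sum>k\<in>B. \<bar>real_of_int k\<bar> powr (- s)) \<le> 2 * zeta s"
proof -
  have half: "(\<Sum>k\<in>P. \<bar>real_of_int k\<bar> powr (- s)) \<le> zeta s"
    if "P \<subseteq> B" "inj_on (\<lambda>k. nat \<bar>k\<bar>) P" for P
  proof -
    have "(\<Sum>k\<in>P. \<bar>real_of_int k\<bar> powr (- s)) = (\<Sum>n\<in>(\<lambda>k. nat \<bar>k\<bar>) ` P. real n powr (- s))"
      using that(2) by (subst sum.reindex) auto
    also have "\<dots> \<le> zeta s"
      using that(1) assms by (intro sum_powr_le_zeta) (auto intro: finite_subset)
    finally show ?thesis .
  qed
  have "(\<Sum>k\<in>B. \<bar>real_of_int k\<bar> powr (- s))
      = (\<Sum>k\<in>B \<inter> {0<..}. \<bar>real_of_int k\<bar> powr (- s)) + (\<Sum>k\<in>B - {0<..}. \<bar>real_of_int k\<bar> powr (- s))"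
    using assms(2) by (rule sum.Int_Diff)
  also have "\<dots> \<le> zeta s + zeta s"
    by (intro add_mono half) (auto simp: inj_on_def)
  finally show ?thesis by simp
qed

lemma sum_prod_le_prod_sum:
  fixes f :: "'a \<Rightarrow> 'b \<Rightarrow> real"
  assumes "finite u" "inj_on (\<lambda>h. restrict h u) G"
    and "\<And>h j. h \<in> G \<Longrightarrow> j \<in> u \<Longrightarrow> h j \<in> B j"
    and "\<And>j. j \<in> u \<Longrightarrow> finite (B j)"
    and "\<And>j k. j \<in> u \<Longrightarrow> k \<in> B j \<Longrightarrow> 0 \<le> f j k"
  shows "(\<Sum>h\<in>G. \<Prod>j\<in>u. f j (h j)) \<le> (\<Prod>j\<in>u. \<Sum>k\<in>B j. f j k)"
proof -
  have "(\<Sum>h\<in>G. \<Prod>j\<in>u. f j (h j)) = (\<Sum>g\<in>(\<lambda>h. restrict h u) ` G. \<Prod>j\<in>u. f j (g j))"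
    using assms(2) by (simp add: sum.reindex)
  also have "\<dots> \<le> (\<Sum>g\<in>PiE u B. \<Prod>j\<in>u. f j (g j))"
  proof (rule sum_mono2)
    show "finite (PiE u B)"
      using assms(1,4) by (rule finite_PiE)
    show "(\<lambda>h. restrict h u) ` G \<subseteq> PiE u B"
      using assms(3) by auto
    show "0 \<le> (\<Prod>j\<in>u. f j (g j))" if "g \<in> PiE u B - (\<lambda>h. restrict h u) ` G" for g
      using that assms(5) by (intro prod_nonneg) blast
  qed
  also have "\<dots> = (\<Prod>j\<in>u. \<Sum>k\<in>B j. f j k)"
    using assms by (simp add: prod_sum_PiE)
  finally show ?thesis .
qed

lemma supp_subset: "supp d h \<subseteq> {1..d}"
  unfolding supp_def by auto

lemma lattice_zero_outside_supp: "h \<in> lattice d \<Longrightarrow> j \<notin> supp d h \<Longrightarrow> h j = 0"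
  unfolding lattice_def supp_def by auto

lemma finite_supp: "finite (supp d h)"
  using supp_subset finite_subset by blast

lemma sum_prod_powr_same_supp_le:
  assumes "s > 1" "finite G" "G \<subseteq> lattice d" "\<And>h. h \<in> G \<Longrightarrow> supp d h = u"
  shows "(\<Sum>h\<in>G. \<Prod>j\<in>u. \<bar>real_of_int (h j)\<bar> powr (- s)) \<le> (2 * zeta s) ^ card u"
proof (cases "G = {}")
  case True
  then show ?thesis using zeta_nonneg[OF assms(1)] by simp
next
  case False
  then obtain h0 where "h0 \<in> G"
    by blast
  then have "finite u"
    using assms(4) finite_supp by metis
  have "inj_on (\<lambda>h. restrict h u) G"
  proof (rule inj_onI)
    fix h h' assume hh': "h \<in> G" "h' \<in> G" "restrict h u = restrict h' u"
    show "h = h'"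
    proof
      fix j
      show "h j = h' j"
      proof (cases "j \<in> u")
        case True
        then show ?thesis using hh'(3) by (metis restrict_apply')
      next
        case False
        then show ?thesis
          using hh'(1,2) assms(3,4) lattice_zero_outside_supp[of _ d j] by (metis subsetD)
      qed
    qed
  qed
  then have "(\<Sum>h\<in>G. \<Prod>j\<in>u. \<bar>real_of_int (h j)\<bar> powr (- s))
      \<le> (\<Prod>j\<in>u. \<Sum>k\<in>(\<lambda>h. h j) ` G. \<bar>real_of_int k\<bar> powr (- s))"
    using \<open>finite u\<close> assms(2) by (intro sum_prod_le_prod_sum) auto
  also have "\<dots> \<le> (\<Prod>j\<in>u. 2 * zeta s)"
  proof (rule prod_mono, rule conjI)
    fix j assume "j \<in> u"
    then have "j \<in> supp d h" if "h \<in> G" for h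
      using assms(4)[OF that] by simp
    then have "0 \<notin> (\<lambda>h. h j) ` G"
      unfolding supp_def by auto
    then show "(\<Sum>k\<in>(\<lambda>h. h j) ` G. \<bar>real_of_int k\<bar> powr (- s)) \<le> 2 * zeta s"
      using assms(1,2) by (intro sum_abs_int_powr_le_2_zeta) auto
  qed (rule sum_nonneg, simp)
  finally show ?thesis by simp
qed

lemma rfun_pos:
  assumes "\<And>u. finite u \<Longrightarrow> \<gamma> u > 0"
  shows "rfun d \<gamma> \<alpha> h > 0"
proof -
  have "(\<Prod>j\<in>supp d h. \<bar>real_of_int (h j)\<bar> powr \<alpha>) > 0"
    unfolding supp_def by (intro prod_pos) auto
  then show ?thesis
    unfolding rfun_def using assms finite_supp by simp
qed

lemma rfun_powr_neg:
  assumes "\<And>u. finite u \<Longrightarrow> \<gamma> u > 0"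
  shows "rfun d \<gamma> \<alpha> h powr (- \<tau>)
    = \<gamma> (supp d h) powr \<tau> * (\<Prod>j\<in>supp d h. \<bar>real_of_int (h j)\<bar> powr (- (\<alpha> * \<tau>)))"
proof -
  have \<gamma>: "\<gamma> (supp d h) > 0"
    using assms finite_supp by blast
  have "rfun d \<gamma> \<alpha> h powr (- \<tau>)
      = (\<Prod>j\<in>supp d h. \<bar>real_of_int (h j)\<bar> powr \<alpha>) powr (- \<tau>) / \<gamma> (supp d h) powr (- \<tau>)"
    unfolding rfun_def using \<gamma> by (simp add: powr_divide prod_nonneg)
  also have "\<dots> = \<gamma> (supp d h) powr \<tau> * (\<Prod>j\<in>supp d h. \<bar>real_of_int (h j)\<bar> powr \<alpha>) powr (- \<tau>)"
    by (simp add: powr_minus divide_inverse)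
  also have "\<dots> = \<gamma> (supp d h) powr \<tau> * (\<Prod>j\<in>supp d h. \<bar>real_of_int (h j)\<bar> powr (- (\<alpha> * \<tau>)))"
    by (simp add: prod_powr_distrib powr_powr)
  finally show ?thesis .
qed

definition weighted_zeta_sum :: "nat \<Rightarrow> real \<Rightarrow> real \<Rightarrow> (nat set \<Rightarrow> real) \<Rightarrow> real" where
  "weighted_zeta_sum d \<tau> \<alpha> \<gamma> = (\<Sum>u\<in>Pow {1..d}. \<gamma> u powr \<tau> * (2 * zeta (\<alpha> * \<tau>)) ^ card u)"

lemma sum_rfun_powr_le_weighted_zeta_sum:
  assumes "\<And>u. finite u \<Longrightarrow> \<gamma> u > 0" "\<alpha> * \<tau> > 1" "finite G" "G \<subseteq> lattice d"
  shows "(\<Sum>h\<in>G. rfun d \<gamma> \<alpha> h powr (- \<tau>)) \<le> weighted_zeta_sum d \<tau> \<alpha> \<gamma>"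
proof -
  have "(\<Sum>h\<in>G. rfun d \<gamma> \<alpha> h powr (- \<tau>))
      = (\<Sum>u\<in>Pow {1..d}. \<Sum>h\<in>{h\<in>G. supp d h = u}. rfun d \<gamma> \<alpha> h powr (- \<tau>))"
    using assms(3) supp_subset by (intro sum.group[symmetric]) auto
  also have "\<dots> = (\<Sum>u\<in>Pow {1..d}. \<gamma> u powr \<tau> *
      (\<Sum>h\<in>{h\<in>G. supp d h = u}. \<Prod>j\<in>u. \<bar>real_of_int (h j)\<bar> powr (- (\<alpha> * \<tau>))))"
    unfolding sum_distrib_left by (intro sum.cong) (auto simp: rfun_powr_neg[OF assms(1)])
  also have "\<dots> \<le> weighted_zeta_sum d \<tau> \<alpha> \<gamma>"
    unfolding weighted_zeta_sum_def using assms(2-4)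
    by (intro sum_mono mult_left_mono sum_prod_powr_same_supp_le) auto
  finally show ?thesis .
qed

lemma inverse_le_of_sum_powr_le:
  fixes r :: "'a \<Rightarrow> real"
  assumes "finite G" "G \<noteq> {}" "\<And>h. h \<in> G \<Longrightarrow> 0 < r h" "\<And>h. h \<in> G \<Longrightarrow> r h \<le> R"
    and "\<tau> > 0" "(\<Sum>h\<in>G. r h powr (- \<tau>)) \<le> S"
  shows "1 / R \<le> S powr (1 / \<tau>) * real (card G) powr (- (1 / \<tau>))"
proof -
  have R: "R > 0"
    using assms(2-4) by (meson ex_in_conv less_le_trans)
  have "real (card G) = (\<Sum>h\<in>G. 1)"
    by simp
  also have "\<dots> \<le> (\<Sum>h\<in>G. R powr \<tau> * r h powr (- \<tau>))"
  proof (rule sum_mono)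
    fix h assume h: "h \<in> G"
    then have "r h powr \<tau> \<le> R powr \<tau>"
      using assms(3-5) by (intro powr_mono2) (auto simp: less_imp_le)
    moreover have "r h powr \<tau> > 0"
      using assms(3)[OF h] by simp
    ultimately show "1 \<le> R powr \<tau> * r h powr (- \<tau>)"
      by (simp add: powr_minus field_simps)
  qed
  also have "\<dots> \<le> R powr \<tau> * S"
    using assms(6) by (simp add: sum_distrib_left[symmetric] mult_left_mono)
  finally have card: "real (card G) \<le> R powr \<tau> * S" .
  have G: "real (card G) > 0"
    using assms(1,2) by (simp add: card_gt_0_iff)
  then have S: "S > 0"
    using card mult_nonneg_nonpos[of "R powr \<tau>" S] by (cases "S > 0") auto
  have "(real (card G) / S) powr (1 / \<tau>) \<le> (R powr \<tau>) powr (1 / \<tau>)"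
    using card G S assms(5) by (intro powr_mono2) (auto simp: field_simps)
  then have "real (card G) powr (1 / \<tau>) / S powr (1 / \<tau>) \<le> R"
    using R S G assms(5) by (simp add: powr_powr powr_divide)
  then show ?thesis
    using R S G by (simp add: powr_minus field_simps)
qed

lemma sum_inverse_le_by_rank:
  fixes r :: "'a \<Rightarrow> real"
  assumes pos: "\<And>h. h \<in> X \<Longrightarrow> 0 < r h"
    and L: "finite L" "L \<subseteq> X" "\<And>h. h \<in> L \<Longrightarrow> r h \<le> M"
    and S: "\<And>G. finite G \<Longrightarrow> G \<subseteq> X \<Longrightarrow> (\<Sum>h\<in>G. r h powr (- \<tau>)) \<le> S"
    and "\<tau> > 0" "finite F" "F \<subseteq> {h \<in> X. M < r h}"
  shows "(\<Sum>h\<in>F. 1 / r h) \<le> S powr (1 / \<tau>) * (\<Sum>j=1..card F. (real (card L) + real j) powr (- (1 / \<tau>)))"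
  using assms(7,8)
proof (induction "card F" arbitrary: F)
  case (Suc n)
  then have "F \<noteq> {}"
    by auto
  then have "Max (r ` F) \<in> r ` F"
    using Suc.prems(1) by (intro Max_in) auto
  then obtain h0 where h0: "h0 \<in> F" "r h0 = Max (r ` F)"
    by auto
  then have h0_max: "r h \<le> r h0" if "h \<in> L \<union> F" for h
    using that Suc.prems L(3) by fastforce
  have "L \<inter> F = {}"
    using L(3) Suc.prems(2) by force
  then have card: "card (L \<union> F) = card L + Suc n"
    using L(1) Suc by (simp add: card_Un_disjoint)
  have card_rest: "card (F - {h0}) = n"
    using Suc.hyps(2) Suc.prems(1) h0(1) by simp
  have "1 / r h0 \<le> S powr (1 / \<tau>) * real (card (L \<union> F)) powr (- (1 / \<tau>))"
    using Suc.prems L pos h0_max \<open>F \<noteq> {}\<close> \<open>\<tau> > 0\<close> S[of "L \<union> F"]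
    by (intro inverse_le_of_sum_powr_le[where r = r]) auto
  moreover have "(\<Sum>h\<in>F - {h0}. 1 / r h)
      \<le> S powr (1 / \<tau>) * (\<Sum>j=1..n. (real (card L) + real j) powr (- (1 / \<tau>)))"
    using Suc.hyps(1)[of "F - {h0}"] card_rest Suc.prems by auto
  moreover have "(\<Sum>h\<in>F. 1 / r h) = 1 / r h0 + (\<Sum>h\<in>F - {h0}. 1 / r h)"
    using Suc.prems(1) h0(1) by (rule sum.remove)
  ultimately show ?case
    unfolding card Suc.hyps(2)[symmetric] by (simp add: algebra_simps)
qed simp

definition axis_point :: "nat \<Rightarrow> nat \<Rightarrow> int" where
  "axis_point k = (\<lambda>j. if j = 1 then int k else 0)"

lemma axis_point_in_Aset:
  assumes "d \<ge> 1" "\<gamma> {} = 1" "\<gamma> {1} > 0" "M \<ge> 1" "\<alpha> > 0"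
    and "real k \<le> (M * \<gamma> {1}) powr (1 / \<alpha>)"
  shows "axis_point k \<in> Aset d \<gamma> \<alpha> M"
proof (cases "k = 0")
  case True
  then have "supp d (axis_point k) = {}"
    unfolding supp_def axis_point_def by auto
  then show ?thesis
    using assms(1,2,4) unfolding Aset_def lattice_def rfun_def axis_point_def by auto
next
  case False
  then have supp: "supp d (axis_point k) = {1}"
    unfolding supp_def axis_point_def using assms(1) by auto
  have "real k powr \<alpha> \<le> ((M * \<gamma> {1}) powr (1 / \<alpha>)) powr \<alpha>"
    using assms(5,6) by (intro powr_mono2) auto
  also have "\<dots> = M * \<gamma> {1}"
    using assms(3-5) by (simp add: powr_powr)
  finally have "rfun d \<gamma> \<alpha> (axis_point k) \<le> M"
    unfolding rfun_def supp using assms(3) by (simp add: axis_point_def field_simps)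
  then show ?thesis
    using assms(1) unfolding Aset_def lattice_def axis_point_def by auto
qed

lemma card_axis_points: "card (axis_point ` {0..m}) = Suc m"
proof -
  have "inj axis_point"
    unfolding axis_point_def by (intro injI) (metis of_nat_eq_iff)
  then show ?thesis
    by (simp add: card_image inj_on_subset)
qed

lemma C2_mult_powr_eq:
  assumes "\<alpha> > 0" "0 < \<tau>" "\<tau> < 1" "M > 0" "\<gamma> {1} > 0"
  shows "C2 d \<tau> \<alpha> \<gamma> * M powr (- (1 - \<tau>) / (\<alpha> * \<tau>)) = weighted_zeta_sum d \<tau> \<alpha> \<gamma> powr (1 / \<tau>)
    * ((M * \<gamma> {1}) powr (1 / \<alpha>)) powr (1 - 1 / \<tau>) / (1 / \<tau> - 1)"
proof -
  have "((M * \<gamma> {1}) powr (1 / \<alpha>)) powr (1 - 1 / \<tau>)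
      = M powr (- (1 - \<tau>) / (\<alpha> * \<tau>)) * \<gamma> {1} powr ((\<tau> - 1) / (\<alpha> * \<tau>))"
    using assms by (simp add: powr_powr powr_mult field_simps)
  moreover have "1 / \<tau> - 1 = (1 - \<tau>) / \<tau>"
    using assms(2) by (simp add: field_simps)
  ultimately show ?thesis
    unfolding C2_def weighted_zeta_sum_def[symmetric] by (simp add: ac_simps)
qed

lemma sum_inverse_rfun_outside_Aset_le:
  assumes "d \<ge> 1" "\<alpha> > 1" "\<And>u. finite u \<Longrightarrow> \<gamma> u > 0" "\<gamma> {} = 1" "M \<ge> 1"
    and "1 / \<alpha> < \<tau>" "\<tau> < 1" "finite F" "F \<subseteq> lattice d - Aset d \<gamma> \<alpha> M"
  shows "(\<Sum>h\<in>F. 1 / rfun d \<gamma> \<alpha> h) \<le> C2 d \<tau> \<alpha> \<gamma> * M powr (- (1 - \<tau>) / (\<alpha> * \<tau>))"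
proof -
  have "0 < 1 / \<alpha>"
    using assms(2) by simp
  then have \<tau>: "\<tau> > 0"
    using assms(6) by linarith
  have \<alpha>\<tau>: "\<alpha> * \<tau> > 1"
    using assms(2,6) by (simp add: field_simps)
  have \<gamma>1: "\<gamma> {1} > 0"
    using assms(3) by simp
  define x where "x = (M * \<gamma> {1}) powr (1 / \<alpha>)"
  define L where "L = axis_point ` {0..nat \<lfloor>x\<rfloor>}"
  have "x > 0"
    unfolding x_def using assms(5) \<gamma>1 by simp
  then have card_L: "real (card L) \<ge> x"
    unfolding L_def card_axis_points by linarith
  have "real k \<le> x" if "k \<le> nat \<lfloor>x\<rfloor>" for k
    using that \<open>x > 0\<close> by linarith
  then have L_in_A: "L \<subseteq> Aset d \<gamma> \<alpha> M"
    unfolding L_def x_def using assms(1,2,4,5) \<gamma>1 by (auto intro!: axis_point_in_Aset)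
  have "(\<Sum>h\<in>F. 1 / rfun d \<gamma> \<alpha> h) \<le> weighted_zeta_sum d \<tau> \<alpha> \<gamma> powr (1 / \<tau>)
      * (\<Sum>j=1..card F. (real (card L) + real j) powr (- (1 / \<tau>)))"
  proof (rule sum_inverse_le_by_rank[where X = "lattice d" and M = M])
    show "L \<subseteq> lattice d"
      using L_in_A unfolding Aset_def by auto
    show "F \<subseteq> {h \<in> lattice d. M < rfun d \<gamma> \<alpha> h}"
      using assms(9) unfolding Aset_def by auto
  qed (use assms(3,8) L_in_A \<tau> \<alpha>\<tau> in \<open>auto simp: L_def Aset_def rfun_pos
      intro: sum_rfun_powr_le_weighted_zeta_sum\<close>)
  also have "\<dots> \<le> weighted_zeta_sum d \<tau> \<alpha> \<gamma> powr (1 / \<tau>) * (real (card L) powr (1 - 1 / \<tau>) / (1 / \<tau> - 1))"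
    using \<open>x > 0\<close> card_L \<tau> assms(7) by (intro mult_left_mono sum_shifted_powr_le) auto
  also have "\<dots> \<le> weighted_zeta_sum d \<tau> \<alpha> \<gamma> powr (1 / \<tau>) * (x powr (1 - 1 / \<tau>) / (1 / \<tau> - 1))"
    using \<open>x > 0\<close> card_L \<tau> assms(7)
    by (intro mult_left_mono divide_right_mono powr_mono2') auto
  also have "\<dots> = C2 d \<tau> \<alpha> \<gamma> * M powr (- (1 - \<tau>) / (\<alpha> * \<tau>))"
    unfolding x_def using C2_mult_powr_eq[of \<alpha> \<tau> M \<gamma> d] assms(2,5,7) \<tau> \<gamma>1 by simp
  finally show ?thesis .
qed

theorem lemma6:
  fixes d :: nat and \<alpha> M \<tau> :: real and \<gamma> :: "nat set \<Rightarrow> real"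
  assumes "d \<ge> 1" and "\<alpha> > 1"
    and "\<And>u. finite u \<Longrightarrow> \<gamma> u > 0" and "\<gamma> {} = 1"
    and "M \<ge> 1"
    and "1 / \<alpha> < \<tau>" and "\<tau> < 1"
  shows "(\<lambda>h. 1 / rfun d \<gamma> \<alpha> h) summable_on (lattice d - Aset d \<gamma> \<alpha> M)
    \<and> (\<Sum>\<^sub>\<infinity>h\<in>lattice d - Aset d \<gamma> \<alpha> M. 1 / rfun d \<gamma> \<alpha> h)
        \<le> C2 d \<tau> \<alpha> \<gamma> * M powr (- (1 - \<tau>) / (\<alpha> * \<tau>))"
proof
  have partial_sums: "(\<Sum>h\<in>F. 1 / rfun d \<gamma> \<alpha> h) \<le> C2 d \<tau> \<alpha> \<gamma> * M powr (- (1 - \<tau>) / (\<alpha> * \<tau>))"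
    if "finite F" "F \<subseteq> lattice d - Aset d \<gamma> \<alpha> M" for F
    using sum_inverse_rfun_outside_Aset_le[OF assms that] .
  show summable: "(\<lambda>h. 1 / rfun d \<gamma> \<alpha> h) summable_on (lattice d - Aset d \<gamma> \<alpha> M)"
    using partial_sums rfun_pos[OF assms(3)]
    by (intro nonneg_bdd_above_summable_on bdd_aboveI) (auto simp: less_imp_le)
  show "(\<Sum>\<^sub>\<infinity>h\<in>lattice d - Aset d \<gamma> \<alpha> M. 1 / rfun d \<gamma> \<alpha> h)
      \<le> C2 d \<tau> \<alpha> \<gamma> * M powr (- (1 - \<tau>) / (\<alpha> * \<tau>))"
    using summable partial_sums by (rule infsum_le_finite_sums)
qed

end
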